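(* Let $(F,H)$ be the unique local solution, on its maximal interval of existence $[0,T_{\max})$, of the matrix Riccati system $$F'=\Gamma\otimes\big(\alpha+(c\otimes I_K)^\top H\big)\big(\alpha+(c\otimes I_K)^\top H\big)^\top-F(I_{N-1}\otimes\Lambda^{-1})F,\quad F(0)=0,$$ $$H'=\big(\Gamma\otimes(\alpha+(c\otimes I_K)^\top H)\big)\xi-F(I_{N-1}\otimes\Lambda^{-1})H,\quad H(0)=0.$$ Then $F(\tau)$ is positive semidefinite for every $\tau\in[0,T_{\max})$.
   Context: $N\ge2$, $K\le D$; $\gamma^1,\dots,\gamma^N>0$ with $\gamma^N=\max_n\gamma^n$; $\bar\gamma=(\sum_n1/\gamma^n)^{-1}$; $c=(c_1,\dots,c_{N-1})^\top$ with $c_n=\bar\gamma(1/\gamma^n-1/\gamma^N)$; $\Gamma:=\mathrm{diag}\{\gamma^1,\dots,\gamma^{N-1}\}-\tfrac1N\mathbb 1_{N-1}\mathbb 1_{N-1}^\top\mathrm{diag}\{\gamma^1-\gamma^N,\dots,\gamma^{N-1}-\gamma^N\}$; $\Lambda\in\mathbb R^{K\times K}$ symmetric positive definite; $\alpha\in\mathbb R^{K\times D}$; $\xi\in\mathbb R^{(N-1)D\times D}$; $F$ is $K(N-1)\times K(N-1)$ and $H$ is $K(N-1)\times D$; $\otimes$ is the Kronecker product. A real square matrix $C$ is positive semidefinite if $b^\top Cb\ge0$ for all $b$ (symmetry not required). *)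

theory Defs
  imports "HOL-Analysis.Analysis" "Jordan_Normal_Form.Matrix"
begin

definition kron :: "real mat \<Rightarrow> real mat \<Rightarrow> real mat" (infixl \<open>\<otimes>\<^sub>K\<close> 70) where
  "kron A B = mat (dim_row A * dim_row B) (dim_col A * dim_col B)
     (\<lambda>(i,j). A $$ (i div dim_row B, j div dim_col B) * B $$ (i mod dim_row B, j mod dim_col B))"

definition mat_inv :: "real mat \<Rightarrow> real mat" where
  "mat_inv A = (SOME B. inverts_mat A B \<and> inverts_mat B A)"

text \<open>Positive semidefinite in the non-symmetric sense of the paper.\<close>
definition psd :: "real mat \<Rightarrow> bool" where
  "psd C \<longleftrightarrow> (\<forall>b \<in> carrier_vec (dim_row C). b \<bullet> (C *\<^sub>v b) \<ge> 0)"

definition sym_pos_def :: "real mat \<Rightarrow> bool" where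
  "sym_pos_def L \<longleftrightarrow> L \<in> carrier_mat (dim_row L) (dim_row L) \<and> transpose_mat L = L \<and>
     (\<forall>v \<in> carrier_vec (dim_row L). v \<noteq> 0\<^sub>v (dim_row L) \<longrightarrow> v \<bullet> (L *\<^sub>v v) > 0)"

definition mat_has_deriv :: "(real \<Rightarrow> real mat) \<Rightarrow> real mat \<Rightarrow> real filter \<Rightarrow> bool" where
  "mat_has_deriv F F' fl \<longleftrightarrow>
     (\<forall>i < dim_row F'. \<forall>j < dim_col F'. ((\<lambda>s. F s $$ (i,j)) has_real_derivative F' $$ (i,j)) fl)"

definition gbar :: "nat \<Rightarrow> (nat \<Rightarrow> real) \<Rightarrow> real" where
  "gbar N \<gamma> = 1 / (\<Sum>n=1..N. 1 / \<gamma> n)"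

text \<open>c as an (N-1) x 1 column matrix; entry i corresponds to c_{i+1}.\<close>
definition cvec :: "nat \<Rightarrow> (nat \<Rightarrow> real) \<Rightarrow> real mat" where
  "cvec N \<gamma> = mat (N - 1) 1 (\<lambda>(i,j). gbar N \<gamma> * (1 / \<gamma> (i+1) - 1 / \<gamma> N))"

definition Gam :: "nat \<Rightarrow> (nat \<Rightarrow> real) \<Rightarrow> real mat" where
  "Gam N \<gamma> = mat (N - 1) (N - 1)
     (\<lambda>(i,j). (if i = j then \<gamma> (i+1) else 0) - (1 / real N) * (\<gamma> (j+1) - \<gamma> N))"

end

theory Submission
  imports Defs "Jordan_Normal_Form.Determinant"
begin

(* Write q_t(c) = c^T F(t) c and M = I kron Lambda^-1, a symmetric psd matrix.  The Riccati
   equation reads F' = Q - F M F with Q = Gamma kron A A^T psd (for Gamma by completing squares,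
   using gamma^n <= gamma^N).  Suppose that q_t(c) + eps e^t, with c on the unit sphere, first
   vanishes at time t0 > 0 and point c0.  Then c0 minimises c |-> q_t0(c) + delta |c|^2, where
   delta = eps e^t0, so (F + F^T) c0 = -2 delta c0 and c0^T F M F c0 = (F^T c0)^T M (F c0) is at
   most delta^2 c0^T M c0.  For small eps this is below delta, so the perturbed form has positive
   derivative at t0 and was already negative shortly before, a contradiction.  Letting eps -> 0
   gives q_t >= 0. *)

section \<open>Quadratic forms\<close>

definition quad_form :: "nat \<Rightarrow> real mat \<Rightarrow> (nat \<Rightarrow> real) \<Rightarrow> real" where
  "quad_form n X c = (\<Sum>i<n. \<Sum>j<n. c i * X $$ (i,j) * c j)"

lemma scalar_prod_mult_mat_vec_eq_quad_form:
  assumes "X \<in> carrier_mat n n" and "b \<in> carrier_vec n"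
  shows "b \<bullet> (X *\<^sub>v b) = quad_form n X (\<lambda>i. b $ i)"
  using assms unfolding quad_form_def
  by (simp add: scalar_prod_def lessThan_atLeast0 sum_distrib_left mult_ac)

lemma quad_form_cong: "(\<And>i. i < n \<Longrightarrow> c i = d i) \<Longrightarrow> quad_form n X c = quad_form n X d"
  unfolding quad_form_def by (intro sum.cong refl) auto

lemma psd_iff_quad_form_nonneg:
  assumes "X \<in> carrier_mat n n"
  shows "psd X \<longleftrightarrow> (\<forall>c. 0 \<le> quad_form n X c)"
proof
  assume X: "psd X"
  show "\<forall>c. 0 \<le> quad_form n X c"
  proof
    fix c
    have "quad_form n X c = quad_form n X (\<lambda>i. vec n c $ i)"
      by (rule quad_form_cong) simp
    also have "\<dots> = vec n c \<bullet> (X *\<^sub>v vec n c)"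
      using assms by (simp add: scalar_prod_mult_mat_vec_eq_quad_form)
    finally have "quad_form n X c = vec n c \<bullet> (X *\<^sub>v vec n c)" .
    then show "0 \<le> quad_form n X c" using X assms unfolding psd_def by simp
  qed
next
  assume "\<forall>c. 0 \<le> quad_form n X c"
  then show "psd X"
    using assms unfolding psd_def by (simp add: scalar_prod_mult_mat_vec_eq_quad_form)
qed

lemma quad_form_scale: "quad_form n X (\<lambda>i. a * c i) = a\<^sup>2 * quad_form n X c"
  unfolding quad_form_def by (simp add: sum_distrib_left power2_eq_square mult_ac)

lemma quad_form_diff:
  assumes "Y \<in> carrier_mat n n"
  shows "quad_form n (X - Y) c = quad_form n X c - quad_form n Y c"
  unfolding quad_form_def sum_subtractf[symmetric] using assms
  by (intro sum.cong refl) (simp add: left_diff_distrib right_diff_distrib)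

lemma quad_form_mult_mult:
  assumes "F \<in> carrier_mat n n" and "M \<in> carrier_mat n n"
  shows "quad_form n (F * M * F) c =
    (\<Sum>k<n. \<Sum>l<n. (\<Sum>i<n. c i * F $$ (i,k)) * M $$ (k,l) * (\<Sum>j<n. F $$ (l,j) * c j))"
proof -
  define f where "f i j k l = c i * F $$ (i,k) * M $$ (k,l) * F $$ (l,j) * c j" for i j k l
  have "quad_form n (F * M * F) c = (\<Sum>i<n. \<Sum>j<n. \<Sum>k<n. \<Sum>l<n. f i j k l)"
    unfolding quad_form_def f_def using assms
    by (intro sum.cong refl)
      (simp add: scalar_prod_def lessThan_atLeast0 sum_distrib_left sum_distrib_right mult_ac)
  also have "\<dots> = (\<Sum>i<n. \<Sum>k<n. \<Sum>j<n. \<Sum>l<n. f i j k l)"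
    by (rule sum.cong[OF refl], rule sum.swap)
  also have "\<dots> = (\<Sum>k<n. \<Sum>i<n. \<Sum>j<n. \<Sum>l<n. f i j k l)"
    by (rule sum.swap)
  also have "\<dots> = (\<Sum>k<n. \<Sum>i<n. \<Sum>l<n. \<Sum>j<n. f i j k l)"
    by (rule sum.cong[OF refl], rule sum.cong[OF refl], rule sum.swap)
  also have "\<dots> = (\<Sum>k<n. \<Sum>l<n. \<Sum>i<n. \<Sum>j<n. f i j k l)"
    by (rule sum.cong[OF refl], rule sum.swap)
  also have "\<dots> = (\<Sum>k<n. \<Sum>l<n. (\<Sum>i<n. c i * F $$ (i,k)) * M $$ (k,l) * (\<Sum>j<n. F $$ (l,j) * c j))"
    unfolding f_def by (simp add: sum_distrib_left sum_distrib_right mult_ac)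
  finally show ?thesis .
qed

lemma bilinear_le_quad_form_mean:
  assumes M: "M \<in> carrier_mat n n" "transpose_mat M = M" "psd M"
  shows "(\<Sum>k<n. \<Sum>l<n. v k * M $$ (k,l) * u l) \<le> quad_form n M (\<lambda>k. (u k + v k) / 2)"
proof -
  let ?B = "\<lambda>x y. \<Sum>k<n. \<Sum>l<n. x k * M $$ (k,l) * y l"
  have sym: "M $$ (k,l) = M $$ (l,k)" if "k < n" "l < n" for k l
    using M(1) that by (metis M(2) carrier_matD index_transpose_mat(1))
  have swap: "?B u v = ?B v u"
    by (subst sum.swap) (intro sum.cong refl, simp add: sym mult_ac)
  have "quad_form n M (\<lambda>k. (u k + v k) / 2) - quad_form n M (\<lambda>k. (u k - v k) / 2) =
      (\<Sum>k<n. \<Sum>l<n. (u k * M $$ (k,l) * v l + v k * M $$ (k,l) * u l) / 2)"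
    unfolding quad_form_def sum_subtractf[symmetric] by (intro sum.cong refl) (simp add: field_simps)
  also have "\<dots> = (?B u v + ?B v u) / 2"
    by (simp only: add_divide_distrib sum.distrib sum_divide_distrib[symmetric])
  finally have "quad_form n M (\<lambda>k. (u k + v k) / 2) - quad_form n M (\<lambda>k. (u k - v k) / 2) = ?B v u"
    unfolding swap by simp
  moreover have "0 \<le> quad_form n M (\<lambda>k. (u k - v k) / 2)"
    using M psd_iff_quad_form_nonneg by blast
  ultimately show ?thesis by linarith
qed

section \<open>Kronecker products\<close>

lemma dim_kron [simp]:
  "dim_row (A \<otimes>\<^sub>K B) = dim_row A * dim_row B"
  "dim_col (A \<otimes>\<^sub>K B) = dim_col A * dim_col B"
  by (simp_all add: kron_def)

lemma kron_carrier_mat: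
  "A \<in> carrier_mat m n \<Longrightarrow> B \<in> carrier_mat p q \<Longrightarrow> A \<otimes>\<^sub>K B \<in> carrier_mat (m * p) (n * q)"
  by (metis carrier_matD carrier_matI dim_kron)

lemma index_kron_block:
  assumes "a < dim_row A" "a' < dim_col A" "c < dim_row B" "c' < dim_col B"
  shows "(A \<otimes>\<^sub>K B) $$ (c + a * dim_row B, c' + a' * dim_col B) = A $$ (a,a') * B $$ (c,c')"
proof -
  have block: "x + y * r < z * r" if "x < r" "y < z" for x y z r :: nat
  proof -
    have "x + y * r < Suc y * r" using that(1) by simp
    also have "\<dots> \<le> z * r" using that(2) by (intro mult_le_mono1) simp
    finally show ?thesis .
  qed
  show ?thesis using assms block[of c "dim_row B" a] block[of c' "dim_col B" a']
    by (simp add: kron_def)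
qed

lemma transpose_kron: "transpose_mat (A \<otimes>\<^sub>K B) = transpose_mat A \<otimes>\<^sub>K transpose_mat B"
proof (rule eq_matI)
  fix i j assume "i < dim_row (transpose_mat A \<otimes>\<^sub>K transpose_mat B)"
    "j < dim_col (transpose_mat A \<otimes>\<^sub>K transpose_mat B)"
  then have ij: "i < dim_col A * dim_col B" "j < dim_row A * dim_row B" by simp_all
  moreover have "0 < dim_col B" "0 < dim_row B" using ij by (auto intro!: gr0I)
  ultimately have "i div dim_col B < dim_col A" "i mod dim_col B < dim_col B"
    "j div dim_row B < dim_row A" "j mod dim_row B < dim_row B"
    by (simp_all add: less_mult_imp_div_less)
  then show "transpose_mat (A \<otimes>\<^sub>K B) $$ (i,j) = (transpose_mat A \<otimes>\<^sub>K transpose_mat B) $$ (i,j)"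
    using ij by (simp add: kron_def)
qed simp_all

lemma quad_form_kron:
  assumes "A \<in> carrier_mat m m" and "B \<in> carrier_mat p p"
  shows "quad_form (m * p) (A \<otimes>\<^sub>K B) b = (\<Sum>a<m. \<Sum>c<p. \<Sum>a'<m. \<Sum>c'<p.
    b (c + a * p) * A $$ (a,a') * B $$ (c,c') * b (c' + a' * p))"
proof -
  have "(A \<otimes>\<^sub>K B) $$ (c + a * p, c' + a' * p) = A $$ (a,a') * B $$ (c,c')"
    if "a < m" "a' < m" "c < p" "c' < p" for a a' c c'
    using index_kron_block[of a A a' c B c'] assms that by simp
  then show ?thesis
    unfolding quad_form_def sum_mult_product by (intro sum.cong refl) simp
qed

lemma index_mult_transpose_self:
  assumes "A \<in> carrier_mat p d" "c < p" "c' < p"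
  shows "(A * transpose_mat A) $$ (c,c') = (\<Sum>e<d. A $$ (c,e) * A $$ (c',e))"
  using assms by (simp add: scalar_prod_def lessThan_atLeast0)

lemma psd_kron_gram:
  assumes G: "G \<in> carrier_mat m m" "psd G" and A: "A \<in> carrier_mat p d"
  shows "psd (G \<otimes>\<^sub>K (A * transpose_mat A))"
proof -
  have AAT: "A * transpose_mat A \<in> carrier_mat p p" using A by simp
  have "0 \<le> quad_form (m * p) (G \<otimes>\<^sub>K (A * transpose_mat A)) b" for b
  proof -
    define y where "y e a = (\<Sum>c<p. b (c + a * p) * A $$ (c,e))" for e a
    have "quad_form (m * p) (G \<otimes>\<^sub>K (A * transpose_mat A)) b = (\<Sum>a<m. \<Sum>c<p. \<Sum>a'<m. \<Sum>c'<p.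
        b (c + a * p) * G $$ (a,a') * (\<Sum>e<d. A $$ (c,e) * A $$ (c',e)) * b (c' + a' * p))"
      unfolding quad_form_kron[OF G(1) AAT]
      by (intro sum.cong refl) (simp add: index_mult_transpose_self[OF A])
    also have "\<dots> = (\<Sum>a<m. \<Sum>c<p. \<Sum>a'<m. \<Sum>c'<p. \<Sum>e<d.
        (b (c + a * p) * A $$ (c,e)) * G $$ (a,a') * (A $$ (c',e) * b (c' + a' * p)))"
      by (intro sum.cong refl) (simp add: sum_distrib_left sum_distrib_right mult_ac)
    also have "\<dots> = (\<Sum>e<d. \<Sum>a<m. \<Sum>a'<m. \<Sum>c<p. \<Sum>c'<p.
        (b (c + a * p) * A $$ (c,e)) * G $$ (a,a') * (A $$ (c',e) * b (c' + a' * p)))"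
      by (simp only: sum.swap[where A="{..<p}" and B="{..<d}"] sum.swap[where A="{..<m}" and B="{..<d}"]
          sum.swap[where A="{..<p}" and B="{..<m}"])
    also have "\<dots> = (\<Sum>e<d. quad_form m G (y e))"
      unfolding quad_form_def y_def
      by (intro sum.cong refl) (simp add: sum_distrib_left sum_distrib_right mult_ac)
    finally show ?thesis
      using G psd_iff_quad_form_nonneg by (simp add: sum_nonneg)
  qed
  then show ?thesis using psd_iff_quad_form_nonneg[OF kron_carrier_mat[OF G(1) AAT]] by blast
qed

lemma psd_one_kron:
  assumes B: "B \<in> carrier_mat p p" "psd B"
  shows "psd (1\<^sub>m m \<otimes>\<^sub>K B)"
proof -
  have "0 \<le> quad_form (m * p) (1\<^sub>m m \<otimes>\<^sub>K B) b" for b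
  proof -
    have diagonal: "(\<Sum>a'<m. \<Sum>c'<p. b (c + a * p) * 1\<^sub>m m $$ (a,a') * B $$ (c,c') * b (c' + a' * p)) =
        (\<Sum>c'<p. b (c + a * p) * B $$ (c,c') * b (c' + a * p))" if "a < m" for a c
    proof -
      have "(\<Sum>a'<m. \<Sum>c'<p. b (c + a * p) * 1\<^sub>m m $$ (a,a') * B $$ (c,c') * b (c' + a' * p)) =
          (\<Sum>a'<m. if a' = a then (\<Sum>c'<p. b (c + a * p) * B $$ (c,c') * b (c' + a * p)) else 0)"
        using that by (intro sum.cong refl) auto
      then show ?thesis using that by simp
    qed
    have "quad_form (m * p) (1\<^sub>m m \<otimes>\<^sub>K B) b = (\<Sum>a<m. quad_form p B (\<lambda>c. b (c + a * p)))"
      unfolding quad_form_kron[OF one_carrier_mat B(1)] quad_form_def[of p]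
      by (rule sum.cong[OF refl], rule sum.cong[OF refl], rule diagonal) simp
    then show ?thesis using B psd_iff_quad_form_nonneg by (simp add: sum_nonneg)
  qed
  then show ?thesis using psd_iff_quad_form_nonneg[OF kron_carrier_mat[OF one_carrier_mat B(1)]] by blast
qed

section \<open>The coefficient matrices\<close>

lemma quad_form_Gam:
  fixes y :: "nat \<Rightarrow> real"
  assumes "0 < N"
  defines "s \<equiv> \<Sum>a<N - 1. y a"
  shows "quad_form (N - 1) (Gam N \<gamma>) y =
    (\<Sum>a<N - 1. \<gamma> (a + 1) * (y a - s / (2 * real N))\<^sup>2)
    + s\<^sup>2 / (4 * (real N)\<^sup>2) * (4 * real N * \<gamma> N - (\<Sum>a<N - 1. \<gamma> (a + 1)))"
proof -
  define P where "P = (\<Sum>a<N - 1. \<gamma> (a + 1) * (y a)\<^sup>2)"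
  define Q where "Q = (\<Sum>a<N - 1. \<gamma> (a + 1) * y a)"
  define R where "R = (\<Sum>a<N - 1. \<gamma> (a + 1))"
  have row: "(\<Sum>b<N - 1. y a * Gam N \<gamma> $$ (a,b) * y b) = \<gamma> (a + 1) * (y a)\<^sup>2 - y a / real N * (Q - \<gamma> N * s)"
    if "a < N - 1" for a
  proof -
    have "(\<Sum>b<N - 1. y a * Gam N \<gamma> $$ (a,b) * y b) = (\<Sum>b<N - 1.
        (if a = b then \<gamma> (a + 1) * y a * y b else 0) - y a / real N * ((\<gamma> (b + 1) - \<gamma> N) * y b))"
      using that by (intro sum.cong refl) (simp add: Gam_def algebra_simps)
    also have "\<dots> = \<gamma> (a + 1) * (y a)\<^sup>2 - y a / real N * (\<Sum>b<N - 1. (\<gamma> (b + 1) - \<gamma> N) * y b)"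
      using that by (simp add: sum_subtractf sum_distrib_left power2_eq_square)
    also have "(\<Sum>b<N - 1. (\<gamma> (b + 1) - \<gamma> N) * y b) = Q - \<gamma> N * s"
      by (simp add: Q_def s_def sum_subtractf sum_distrib_left left_diff_distrib)
    finally show ?thesis .
  qed
  have "quad_form (N - 1) (Gam N \<gamma>) y = (\<Sum>a<N - 1. \<gamma> (a + 1) * (y a)\<^sup>2 - y a / real N * (Q - \<gamma> N * s))"
    unfolding quad_form_def by (intro sum.cong refl row) simp
  also have "\<dots> = P - s / real N * (Q - \<gamma> N * s)"
    by (simp add: P_def s_def sum_subtractf sum_distrib_right sum_divide_distrib)
  also have "\<dots> = (P - s / real N * Q + s\<^sup>2 / (4 * (real N)\<^sup>2) * R) + s\<^sup>2 / (4 * (real N)\<^sup>2) * (4 * real N * \<gamma> N - R)"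
    using assms(1) by (simp add: field_simps power2_eq_square)
  also have "P - s / real N * Q + s\<^sup>2 / (4 * (real N)\<^sup>2) * R =
      (\<Sum>a<N - 1. \<gamma> (a + 1) * (y a)\<^sup>2 - s / real N * (\<gamma> (a + 1) * y a) + s\<^sup>2 / (4 * (real N)\<^sup>2) * \<gamma> (a + 1))"
    by (simp add: P_def Q_def R_def sum.distrib sum_subtractf sum_distrib_left)
  also have "\<dots> = (\<Sum>a<N - 1. \<gamma> (a + 1) * (y a - s / (2 * real N))\<^sup>2)"
    using assms(1) by (intro sum.cong refl) (simp add: field_simps power2_eq_square)
  finally show ?thesis unfolding R_def .
qed

lemma psd_Gam:
  assumes N: "0 < N" and \<gamma>: "\<forall>n\<in>{1..N}. 0 \<le> \<gamma> n" "\<forall>n\<in>{1..N}. \<gamma> n \<le> \<gamma> N"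
  shows "psd (Gam N \<gamma>)"
proof -
  have "0 \<le> quad_form (N - 1) (Gam N \<gamma>) y" for y
  proof -
    have "(\<Sum>a<N - 1. \<gamma> (a + 1)) \<le> real (N - 1) * \<gamma> N"
      using sum_bounded_above[of "{..<N - 1}" "\<lambda>a. \<gamma> (a + 1)" "\<gamma> N"] \<gamma>(2) by fastforce
    also have "\<dots> \<le> 4 * real N * \<gamma> N"
      using \<gamma>(1) N by (intro mult_right_mono) auto
    finally have "0 \<le> 4 * real N * \<gamma> N - (\<Sum>a<N - 1. \<gamma> (a + 1))" by simp
    moreover have "0 \<le> \<gamma> (a + 1)" if "a < N - 1" for a using \<gamma>(1) that by auto
    ultimately show ?thesis unfolding quad_form_Gam[OF N] by (intro add_nonneg_nonneg sum_nonneg) auto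
  qed
  moreover have "Gam N \<gamma> \<in> carrier_mat (N - 1) (N - 1)" by (simp add: Gam_def)
  ultimately show ?thesis using psd_iff_quad_form_nonneg by blast
qed

lemma mat_inv_sym_pos_def:
  assumes L: "\<Lambda> \<in> carrier_mat K K" and pd: "sym_pos_def \<Lambda>"
  shows "mat_inv \<Lambda> \<in> carrier_mat K K" and "\<Lambda> * mat_inv \<Lambda> = 1\<^sub>m K"
proof -
  have "det \<Lambda> \<noteq> 0"
  proof
    assume "det \<Lambda> = 0"
    then obtain u where u: "u \<in> carrier_vec K" "u \<noteq> 0\<^sub>v K" "\<Lambda> *\<^sub>v u = 0\<^sub>v K"
      using det_0_iff_vec_prod_zero[OF L] by blast
    then have "0 < u \<bullet> (\<Lambda> *\<^sub>v u)" using pd L unfolding sym_pos_def_def by auto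
    then show False using u by simp
  qed
  from det_non_zero_imp_unit[OF L this, of "()"]
  obtain B where B: "B \<in> carrier_mat K K" "B * \<Lambda> = 1\<^sub>m K" "\<Lambda> * B = 1\<^sub>m K"
    unfolding Units_def ring_mat_def by auto
  have "inverts_mat \<Lambda> B \<and> inverts_mat B \<Lambda>" using B L by (simp add: inverts_mat_def)
  then have "inverts_mat \<Lambda> (mat_inv \<Lambda>) \<and> inverts_mat (mat_inv \<Lambda>) \<Lambda>"
    unfolding mat_inv_def by (rule someI)
  then have inv: "\<Lambda> * mat_inv \<Lambda> = 1\<^sub>m K" "mat_inv \<Lambda> * \<Lambda> = 1\<^sub>m (dim_row (mat_inv \<Lambda>))"
    using L by (simp_all add: inverts_mat_def)
  have "dim_row (mat_inv \<Lambda>) = K" using arg_cong[OF inv(2), of dim_col] L by simp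
  moreover have "dim_col (mat_inv \<Lambda>) = K" using arg_cong[OF inv(1), of dim_col] by simp
  ultimately show "mat_inv \<Lambda> \<in> carrier_mat K K" by (rule carrier_matI)
  show "\<Lambda> * mat_inv \<Lambda> = 1\<^sub>m K" by (rule inv(1))
qed

lemma sym_pos_def_mat_inv:
  assumes L: "\<Lambda> \<in> carrier_mat K K" and pd: "sym_pos_def \<Lambda>"
  shows "mat_inv \<Lambda> \<in> carrier_mat K K" and "transpose_mat (mat_inv \<Lambda>) = mat_inv \<Lambda>"
    and "psd (mat_inv \<Lambda>)"
proof -
  define B where "B = mat_inv \<Lambda>"
  have B: "B \<in> carrier_mat K K" "\<Lambda> * B = 1\<^sub>m K" using mat_inv_sym_pos_def[OF L pd] by (simp_all add: B_def)
  have "transpose_mat B = transpose_mat B * (\<Lambda> * B)" using B by simp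
  also have "\<dots> = (transpose_mat B * \<Lambda>) * B"
    using assoc_mult_mat[of "transpose_mat B" K K \<Lambda> K B K] B L by simp
  also have "transpose_mat B * \<Lambda> = transpose_mat (\<Lambda> * B)"
    using transpose_mult[OF L B(1)] pd by (simp add: sym_pos_def_def)
  finally have "transpose_mat B = B" using B by simp
  moreover have "psd B" unfolding psd_def
  proof
    fix w :: "real Matrix.vec" assume "w \<in> carrier_vec (dim_row B)"
    then have w: "w \<in> carrier_vec K" using B by simp
    define u where "u = B *\<^sub>v w"
    have u: "u \<in> carrier_vec K" using B w by (simp add: u_def)
    have "\<Lambda> *\<^sub>v u = w"
      using B L w unfolding u_def by (metis assoc_mult_mat_vec one_mult_mat_vec)
    then have "w \<bullet> (B *\<^sub>v w) = u \<bullet> (\<Lambda> *\<^sub>v u)"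
      using comm_scalar_prod[OF w u] by (simp add: u_def)
    also have "0 \<le> \<dots>"
      using pd u L unfolding sym_pos_def_def by (cases "u = 0\<^sub>v K") (auto intro: less_imp_le)
    finally show "0 \<le> w \<bullet> (B *\<^sub>v w)" .
  qed
  ultimately show "mat_inv \<Lambda> \<in> carrier_mat K K" "transpose_mat (mat_inv \<Lambda>) = mat_inv \<Lambda>"
    "psd (mat_inv \<Lambda>)" using B unfolding B_def by simp_all
qed

lemma one_kron_mat_inv:
  fixes m :: nat
  assumes "\<Lambda> \<in> carrier_mat K K" and "sym_pos_def \<Lambda>"
  defines "M \<equiv> 1\<^sub>m m \<otimes>\<^sub>K mat_inv \<Lambda>"
  shows "M \<in> carrier_mat (m * K) (m * K)" and "transpose_mat M = M" and "psd M"
  using kron_carrier_mat[OF one_carrier_mat sym_pos_def_mat_inv(1)[OF assms(1,2)]]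
    psd_one_kron[OF sym_pos_def_mat_inv(1,3)[OF assms(1,2)]] sym_pos_def_mat_inv(2)[OF assms(1,2)]
  unfolding M_def by (simp_all add: transpose_kron)

section \<open>The unit sphere and first zero times\<close>

(* Coordinates from n on are pinned to 0, so that the set is compact in the product topology
   of nat \<Rightarrow> real. *)
definition unit_sphere :: "nat \<Rightarrow> (nat \<Rightarrow> real) set" where
  "unit_sphere n = {c. (\<forall>i\<ge>n. c i = 0) \<and> (\<Sum>i<n. (c i)\<^sup>2) = 1}"

lemma unit_sphere_abs_le_1:
  assumes "c \<in> unit_sphere n"
  shows "\<bar>c i\<bar> \<le> 1"
proof (cases "i < n")
  case True
  have "(c i)\<^sup>2 \<le> (\<Sum>i<n. (c i)\<^sup>2)" using True by (intro member_le_sum) auto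
  then show ?thesis using assms unfolding unit_sphere_def by (simp add: abs_square_le_1)
qed (use assms in \<open>simp add: unit_sphere_def\<close>)

lemma compact_unit_sphere: "compact (unit_sphere n)"
proof -
  define Box where "Box = PiE UNIV (\<lambda>i::nat. if i < n then {-1..1::real} else {0})"
  define S where "S = UNIV \<inter> (\<lambda>c::nat \<Rightarrow> real. \<Sum>i<n. (c i)\<^sup>2) -` {1}"
  have "compactin (product_topology (\<lambda>i. euclidean) UNIV) Box"
    unfolding Box_def compactin_PiE by auto
  then have "compact Box" unfolding euclidean_product_topology by simp
  moreover have "continuous_on UNIV (\<lambda>c::nat \<Rightarrow> real. \<Sum>i<n. (c i)\<^sup>2)"
    by (intro continuous_intros continuous_on_product_then_coordinatewise continuous_on_id)
  then have "closed S" unfolding S_def by (rule continuous_closed_preimage) auto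
  moreover have "unit_sphere n = Box \<inter> S"
  proof (intro equalityI subsetI)
    fix c assume c: "c \<in> unit_sphere n"
    then have "\<bar>c i\<bar> \<le> 1" for i by (rule unit_sphere_abs_le_1)
    then show "c \<in> Box \<inter> S" using c unfolding unit_sphere_def Box_def S_def
      by (auto simp: PiE_iff abs_le_iff)
  next
    fix c assume "c \<in> Box \<inter> S"
    then have box: "c i \<in> (if i < n then {-1..1} else {0})" for i
      unfolding Box_def by (auto simp: PiE_iff)
    moreover have "(\<Sum>i<n. (c i)\<^sup>2) = 1" using \<open>c \<in> Box \<inter> S\<close> unfolding S_def by auto
    moreover have "c i = 0" if "n \<le> i" for i using box[of i] that by simp
    ultimately show "c \<in> unit_sphere n" unfolding unit_sphere_def by auto
  qed
  ultimately show ?thesis by (simp add: compact_Int_closed)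
qed

lemma quad_form_le_sum_abs:
  assumes "c \<in> unit_sphere n"
  shows "quad_form n M c \<le> (\<Sum>k<n. \<Sum>l<n. \<bar>M $$ (k,l)\<bar>)"
  unfolding quad_form_def
proof (intro sum_mono)
  fix k l
  have "c k * M $$ (k,l) * c l \<le> \<bar>c k * M $$ (k,l) * c l\<bar>" by (rule abs_ge_self)
  also have "\<dots> = \<bar>c k\<bar> * \<bar>c l\<bar> * \<bar>M $$ (k,l)\<bar>" by (simp add: abs_mult mult_ac)
  also have "\<dots> \<le> 1 * 1 * \<bar>M $$ (k,l)\<bar>"
    using unit_sphere_abs_le_1[OF assms] by (intro mult_right_mono mult_mono) auto
  finally show "c k * M $$ (k,l) * c l \<le> \<bar>M $$ (k,l)\<bar>" by simp
qed

lemma quad_form_nonneg_from_unit_sphere: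
  assumes sphere: "\<And>c. c \<in> unit_sphere n \<Longrightarrow> 0 \<le> quad_form n X c + \<delta>"
  shows "0 \<le> quad_form n X c + \<delta> * (\<Sum>i<n. (c i)\<^sup>2)"
proof (cases "(\<Sum>i<n. (c i)\<^sup>2) = 0")
  case True
  then show ?thesis by (simp add: quad_form_def sum_nonneg_eq_0_iff)
next
  case False
  define r where "r = (\<Sum>i<n. (c i)\<^sup>2)"
  have r: "0 < r" using False unfolding r_def by (simp add: order_less_le sum_nonneg)
  define c' where "c' i = (if i < n then c i / sqrt r else 0)" for i
  have "(\<Sum>i<n. (c' i)\<^sup>2) = (\<Sum>i<n. (c i)\<^sup>2) / r"
    unfolding c'_def using r by (simp add: power_divide sum_divide_distrib)
  then have "c' \<in> unit_sphere n" using r unfolding unit_sphere_def r_def by (simp add: c'_def)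
  have "quad_form n X c = quad_form n X (\<lambda>i. sqrt r * c' i)"
    by (rule quad_form_cong) (use r in \<open>simp add: c'_def\<close>)
  also have "\<dots> = r * quad_form n X c'" using r by (simp add: quad_form_scale)
  finally have "quad_form n X c + \<delta> * r = r * (quad_form n X c' + \<delta>)"
    by (simp add: distrib_left mult.commute)
  also have "0 \<le> \<dots>" using sphere[OF \<open>c' \<in> unit_sphere n\<close>] r by simp
  finally show ?thesis unfolding r_def .
qed

lemma mat_has_deriv_subset:
  "mat_has_deriv F F' (at t within S) \<Longrightarrow> T \<subseteq> S \<Longrightarrow> mat_has_deriv F F' (at t within T)"
  unfolding mat_has_deriv_def by (meson has_field_derivative_subset)

lemma quad_form_has_real_derivative:
  assumes "mat_has_deriv F F' (at t within S)" and "F' \<in> carrier_mat n n"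
  shows "((\<lambda>s. quad_form n (F s) c) has_real_derivative quad_form n F' c) (at t within S)"
  using assms unfolding quad_form_def mat_has_deriv_def
  by (auto intro!: DERIV_sum DERIV_cmult DERIV_cmult_right)

lemma continuous_on_quad_form:
  assumes deriv: "\<And>t. t \<in> T \<Longrightarrow> mat_has_deriv F (F' t) (at t within T)"
    and carrier: "\<And>t. t \<in> T \<Longrightarrow> F' t \<in> carrier_mat n n"
  shows "continuous_on (C \<times> T) (\<lambda>p. quad_form n (F (snd p)) (fst p))"
proof -
  have "continuous (at t within T) (\<lambda>t. F t $$ (i,j))" if "t \<in> T" "i < n" "j < n" for t i j
    using deriv[OF that(1)] carrier[OF that(1)] that(2,3)
    unfolding mat_has_deriv_def by (intro DERIV_continuous) auto
  then have entry: "continuous_on T (\<lambda>t. F t $$ (i,j))" if "i < n" "j < n" for i j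
    using that by (simp add: continuous_on_eq_continuous_within)
  have "continuous_on (C \<times> T) (\<lambda>p. F (snd p) $$ (i,j))" if "i < n" "j < n" for i j
    by (rule continuous_on_compose2[OF entry[OF that] continuous_on_snd[OF continuous_on_id]]) auto
  moreover have "continuous_on (C \<times> T) (\<lambda>p. fst p i)" for i
    by (rule continuous_on_product_then_coordinatewise[OF continuous_on_fst[OF continuous_on_id]])
  ultimately show ?thesis
    unfolding quad_form_def by (intro continuous_on_sum continuous_on_mult) auto
qed

lemma nonneg_at_end_if_pos_before:
  fixes f :: "real \<Rightarrow> real"
  assumes "continuous_on {a..t} f" and "a < t" and "\<And>s. a \<le> s \<Longrightarrow> s < t \<Longrightarrow> 0 < f s"
  shows "0 \<le> f t"
  using continuous_ge_on_closure[of "{a..<t}" f t 0] assms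
  by (simp add: closure_atLeastLessThan less_imp_le)

lemma first_zero_time:
  fixes h :: "'a::t2_space \<times> real \<Rightarrow> real"
  assumes C: "compact C" and h: "continuous_on (C \<times> {0..\<tau>}) h"
    and start: "\<And>c. c \<in> C \<Longrightarrow> 0 < h (c, 0)"
    and hit: "c \<in> C" "0 \<le> t" "t \<le> \<tau>" "h (c, t) \<le> 0"
  obtains c\<^sub>0 t\<^sub>0 where "c\<^sub>0 \<in> C" "0 < t\<^sub>0" "t\<^sub>0 \<le> \<tau>" "h (c\<^sub>0, t\<^sub>0) = 0"
    "\<And>c. c \<in> C \<Longrightarrow> 0 \<le> h (c, t\<^sub>0)" "\<And>c s. c \<in> C \<Longrightarrow> 0 \<le> s \<Longrightarrow> s < t\<^sub>0 \<Longrightarrow> 0 < h (c, s)"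
proof -
  define Z where "Z = (C \<times> {0..\<tau>}) \<inter> h -` {..0}"
  have CT: "compact (C \<times> {0..\<tau>})" using C by (simp add: compact_Times)
  have "closed Z"
    unfolding Z_def by (intro continuous_closed_preimage h compact_imp_closed CT closed_atMost)
  moreover have "(C \<times> {0..\<tau>}) \<inter> Z = Z" unfolding Z_def by blast
  ultimately have "compact Z" using compact_Int_closed[OF CT] by metis
  then have "compact (snd ` Z)" by (intro compact_continuous_image continuous_on_snd continuous_on_id)
  moreover have "t \<in> snd ` Z" using hit unfolding Z_def by (intro image_eqI[of _ snd "(c, t)"]) auto
  ultimately obtain t\<^sub>0 where "t\<^sub>0 \<in> snd ` Z" and least: "\<And>s. s \<in> snd ` Z \<Longrightarrow> t\<^sub>0 \<le> s"
    using compact_attains_inf[of "snd ` Z"] by blast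
  then obtain c\<^sub>0 where c\<^sub>0: "c\<^sub>0 \<in> C" "0 \<le> t\<^sub>0" "t\<^sub>0 \<le> \<tau>" "h (c\<^sub>0, t\<^sub>0) \<le> 0"
    unfolding Z_def by auto
  have before: "0 < h (c, s)" if "c \<in> C" "0 \<le> s" "s < t\<^sub>0" for c s
  proof (rule ccontr)
    assume "\<not> 0 < h (c, s)"
    then have "s \<in> snd ` Z"
      using that c\<^sub>0 unfolding Z_def by (intro image_eqI[of _ snd "(c, s)"]) auto
    then show False using least that(3) by fastforce
  qed
  have "t\<^sub>0 \<noteq> 0" using start[OF c\<^sub>0(1)] c\<^sub>0(4) by auto
  then have t\<^sub>0: "0 < t\<^sub>0" using c\<^sub>0(2) by simp
  have at_t\<^sub>0: "0 \<le> h (c, t\<^sub>0)" if c: "c \<in> C" for c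
  proof (rule nonneg_at_end_if_pos_before[OF _ t\<^sub>0 before[OF c]])
    show "continuous_on {0..t\<^sub>0} (\<lambda>s. h (c, s))"
      using c c\<^sub>0(3) by (intro continuous_on_compose2[OF h]) (auto intro!: continuous_intros)
  qed
  show ?thesis
    using that[OF c\<^sub>0(1) t\<^sub>0 c\<^sub>0(3) _ at_t\<^sub>0 before] at_t\<^sub>0[OF c\<^sub>0(1)] c\<^sub>0(4) by simp
qed

section \<open>The Riccati comparison argument\<close>

lemma linear_coeff_eq_0_if_quadratic_nonneg:
  fixes L Q :: real
  assumes nonneg: "\<And>x. 0 \<le> L * x + Q * x\<^sup>2"
  shows "L = 0"
proof (rule ccontr)
  assume "L \<noteq> 0"
  define q where "q = \<bar>Q\<bar> + 1"
  have q: "0 < q" "Q \<le> q" unfolding q_def by auto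
  define x where "x = - L / (2 * q)"
  have "L * x + Q * x\<^sup>2 \<le> L * x + q * x\<^sup>2" using q by (simp add: mult_right_mono)
  also have "\<dots> = - L\<^sup>2 / (4 * q)" unfolding x_def using q by (simp add: field_simps power2_eq_square)
  also have "\<dots> < 0" using \<open>L \<noteq> 0\<close> q by (simp add: divide_neg_pos)
  finally show False using nonneg[of x] by simp
qed

lemma quad_form_add_unit:
  assumes k: "k < n"
  defines "e \<equiv> \<lambda>i. if i = k then 1 else 0"
  shows "quad_form n X (\<lambda>i. c i + x * e i) = quad_form n X c
    + x * ((\<Sum>j<n. X $$ (k,j) * c j) + (\<Sum>i<n. c i * X $$ (i,k))) + x\<^sup>2 * X $$ (k,k)"
proof -
  have pick_right: "(\<Sum>j<n. f j * e j) = f k" for f :: "nat \<Rightarrow> real"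
    using k by (simp add: e_def if_distrib[of "\<lambda>z. _ * z"] sum.delta' cong: if_cong)
  have pick_left: "(\<Sum>i<n. e i * f i) = f k" for f :: "nat \<Rightarrow> real"
    using pick_right[of f] by (simp add: mult.commute)
  have "quad_form n X (\<lambda>i. c i + x * e i) = (\<Sum>i<n. \<Sum>j<n. c i * X $$ (i,j) * c j
      + x * (c i * X $$ (i,j) * e j) + x * (e i * (X $$ (i,j) * c j)) + x\<^sup>2 * (e i * X $$ (i,j) * e j))"
    unfolding quad_form_def by (intro sum.cong refl) (simp add: algebra_simps power2_eq_square)
  also have "\<dots> = quad_form n X c + x * (\<Sum>i<n. \<Sum>j<n. c i * X $$ (i,j) * e j)
      + x * (\<Sum>i<n. e i * (\<Sum>j<n. X $$ (i,j) * c j)) + x\<^sup>2 * (\<Sum>i<n. \<Sum>j<n. e i * X $$ (i,j) * e j)"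
    unfolding quad_form_def by (simp add: sum.distrib sum_distrib_left)
  also have "\<dots> = quad_form n X c + x * (\<Sum>i<n. c i * X $$ (i,k))
      + x * (\<Sum>j<n. X $$ (k,j) * c j) + x\<^sup>2 * X $$ (k,k)"
    by (simp only: pick_right pick_left)
  finally show ?thesis by (simp add: algebra_simps)
qed

lemma quad_form_minimizer_gradient:
  assumes nonneg: "\<And>c. 0 \<le> quad_form n X c + \<delta> * (\<Sum>i<n. (c i)\<^sup>2)"
    and zero: "quad_form n X c\<^sub>0 + \<delta> * (\<Sum>i<n. (c\<^sub>0 i)\<^sup>2) = 0" and k: "k < n"
  shows "(\<Sum>j<n. X $$ (k,j) * c\<^sub>0 j) + (\<Sum>i<n. c\<^sub>0 i * X $$ (i,k)) = - 2 * \<delta> * c\<^sub>0 k"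
proof -
  define e where "e i = (if i = k then 1 else 0 :: real)" for i
  define L where "L = (\<Sum>j<n. X $$ (k,j) * c\<^sub>0 j) + (\<Sum>i<n. c\<^sub>0 i * X $$ (i,k)) + 2 * \<delta> * c\<^sub>0 k"
  have "0 \<le> L * x + (X $$ (k,k) + \<delta>) * x\<^sup>2" for x
  proof -
    have "(\<Sum>i<n. (c\<^sub>0 i + x * e i)\<^sup>2) = (\<Sum>i<n. (c\<^sub>0 i)\<^sup>2 + (if i = k then 2 * x * c\<^sub>0 k + x\<^sup>2 else 0))"
      unfolding e_def by (intro sum.cong refl) (simp add: power2_eq_square algebra_simps)
    also have "\<dots> = (\<Sum>i<n. (c\<^sub>0 i)\<^sup>2) + 2 * x * c\<^sub>0 k + x\<^sup>2"
      using k by (simp add: sum.distrib)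
    finally have "0 \<le> quad_form n X c\<^sub>0 + \<delta> * (\<Sum>i<n. (c\<^sub>0 i)\<^sup>2) + L * x + (X $$ (k,k) + \<delta>) * x\<^sup>2"
      using nonneg[of "\<lambda>i. c\<^sub>0 i + x * e i"] quad_form_add_unit[OF k, of X c\<^sub>0 x]
      unfolding L_def e_def by (simp add: algebra_simps)
    then show ?thesis using zero by simp
  qed
  then have "L = 0" by (rule linear_coeff_eq_0_if_quadratic_nonneg)
  then show ?thesis unfolding L_def by simp
qed

lemma quad_form_mult_mult_le:
  assumes F: "F \<in> carrier_mat n n" and M: "M \<in> carrier_mat n n" "transpose_mat M = M" "psd M"
    and gradient: "\<And>k. k < n \<Longrightarrow> (\<Sum>j<n. F $$ (k,j) * c j) + (\<Sum>i<n. c i * F $$ (i,k)) = - 2 * \<delta> * c k"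
  shows "quad_form n (F * M * F) c \<le> \<delta>\<^sup>2 * quad_form n M c"
proof -
  define u where "u k = (\<Sum>j<n. F $$ (k,j) * c j)" for k
  define v where "v k = (\<Sum>i<n. c i * F $$ (i,k))" for k
  have "quad_form n (F * M * F) c = (\<Sum>k<n. \<Sum>l<n. v k * M $$ (k,l) * u l)"
    unfolding quad_form_mult_mult[OF F M(1)] u_def v_def ..
  also have "\<dots> \<le> quad_form n M (\<lambda>k. (u k + v k) / 2)"
    by (rule bilinear_le_quad_form_mean[OF M])
  also have "\<dots> = quad_form n M (\<lambda>k. - \<delta> * c k)"
    by (rule quad_form_cong) (simp add: u_def v_def gradient)
  also have "\<dots> = \<delta>\<^sup>2 * quad_form n M c"
    using quad_form_scale[of n M "- \<delta>" c] by simp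
  finally show ?thesis .
qed

lemma has_real_derivative_pos_smaller_left:
  assumes "(f has_real_derivative l) (at t within {a..b})" and "0 < l" and "a < t" "t \<le> b"
  obtains s where "a \<le> s" "s < t" "f s < f t"
proof -
  obtain d where d: "0 < d" "\<And>\<eta>. 0 < \<eta> \<Longrightarrow> t - \<eta> \<in> {a..b} \<Longrightarrow> \<eta> < d \<Longrightarrow> f (t - \<eta>) < f t"
    using has_real_derivative_pos_inc_left[OF assms(1,2)] by blast
  define \<eta> where "\<eta> = min d (t - a) / 2"
  have "0 < \<eta>" "\<eta> < d" "\<eta> \<le> t - a" using d(1) assms(3) by (auto simp: \<eta>_def min_def)
  then show ?thesis using that[of "t - \<eta>"] d(2) assms(4) by auto
qed

lemma riccati_rate_gt_at_minimizer:
  assumes M: "M \<in> carrier_mat n n" "transpose_mat M = M" "psd M"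
    and F: "F \<in> carrier_mat n n" and Q: "Q \<in> carrier_mat n n" "psd Q"
    and nonneg: "\<And>c. 0 \<le> quad_form n F c + \<delta> * (\<Sum>i<n. (c i)\<^sup>2)"
    and zero: "quad_form n F c\<^sub>0 + \<delta> * (\<Sum>i<n. (c\<^sub>0 i)\<^sup>2) = 0"
    and \<delta>: "0 < \<delta>" "\<delta> * quad_form n M c\<^sub>0 < 1"
  shows "- \<delta> < quad_form n (Q - F * M * F) c\<^sub>0"
proof -
  have "quad_form n (F * M * F) c\<^sub>0 \<le> \<delta>\<^sup>2 * quad_form n M c\<^sub>0"
    using F M quad_form_minimizer_gradient[OF nonneg zero] by (intro quad_form_mult_mult_le) auto
  also have "\<dots> < \<delta>" using \<delta> by (simp add: power2_eq_square)
  finally have "quad_form n (F * M * F) c\<^sub>0 < \<delta>" .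
  moreover have "0 \<le> quad_form n Q c\<^sub>0" using Q psd_iff_quad_form_nonneg by blast
  ultimately show ?thesis using F M(1) by (simp add: quad_form_diff)
qed

lemma riccati_perturbed_pos:
  fixes F F' :: "real \<Rightarrow> real mat"
  assumes M: "M \<in> carrier_mat n n" "transpose_mat M = M" "psd M"
    and \<mu>: "\<And>c. c \<in> unit_sphere n \<Longrightarrow> quad_form n M c \<le> \<mu>"
    and carrier: "\<And>t. t \<in> {0..\<tau>} \<Longrightarrow> F t \<in> carrier_mat n n \<and> F' t \<in> carrier_mat n n"
    and Q: "\<And>t. t \<in> {0..\<tau>} \<Longrightarrow> Q t \<in> carrier_mat n n \<and> psd (Q t)"
    and deriv: "\<And>t. t \<in> {0..\<tau>} \<Longrightarrow> mat_has_deriv F (F' t) (at t within {0..\<tau>})"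
    and riccati: "\<And>t. t \<in> {0..\<tau>} \<Longrightarrow> F' t = Q t - F t * M * F t"
    and F0: "F 0 = 0\<^sub>m n n"
    and \<epsilon>: "0 < \<epsilon>" "\<epsilon> * exp \<tau> * \<mu> < 1"
    and c: "c \<in> unit_sphere n" and t: "t \<in> {0..\<tau>}"
  shows "0 < quad_form n (F t) c + \<epsilon> * exp t"
proof (rule ccontr)
  define h where "h p = quad_form n (F (snd p)) (fst p) + \<epsilon> * exp (snd p)" for p
  assume "\<not> 0 < quad_form n (F t) c + \<epsilon> * exp t"
  then have "h (c, t) \<le> 0" by (simp add: h_def)
  moreover have "continuous_on (unit_sphere n \<times> {0..\<tau>}) h"
    unfolding h_def using carrier deriv
    by (intro continuous_intros continuous_on_quad_form[of "{0..\<tau>}" F F' n]) auto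
  moreover have "0 < h (c', 0)" for c' using \<epsilon> by (simp add: h_def F0 quad_form_def)
  ultimately obtain c\<^sub>0 t\<^sub>0 where c\<^sub>0: "c\<^sub>0 \<in> unit_sphere n" and t\<^sub>0: "0 < t\<^sub>0" "t\<^sub>0 \<le> \<tau>"
      and zero: "h (c\<^sub>0, t\<^sub>0) = 0" and min: "\<And>c. c \<in> unit_sphere n \<Longrightarrow> 0 \<le> h (c, t\<^sub>0)"
      and before: "\<And>c s. c \<in> unit_sphere n \<Longrightarrow> 0 \<le> s \<Longrightarrow> s < t\<^sub>0 \<Longrightarrow> 0 < h (c, s)"
    using first_zero_time[OF compact_unit_sphere] c t by (metis atLeastAtMost_iff)
  define \<delta> where "\<delta> = \<epsilon> * exp t\<^sub>0"
  have t\<^sub>0I: "t\<^sub>0 \<in> {0..\<tau>}" using t\<^sub>0 by simp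
  have "0 \<le> quad_form n M c\<^sub>0" using M psd_iff_quad_form_nonneg by blast
  then have "\<delta> * quad_form n M c\<^sub>0 \<le> \<epsilon> * exp \<tau> * \<mu>"
    using \<epsilon>(1) t\<^sub>0(2) \<mu>[OF c\<^sub>0] unfolding \<delta>_def by (intro mult_mono) auto
  then have small: "\<delta> * quad_form n M c\<^sub>0 < 1" using \<epsilon>(2) by linarith
  have nonneg: "0 \<le> quad_form n (F t\<^sub>0) c' + \<delta> * (\<Sum>i<n. (c' i)\<^sup>2)" for c'
    using min by (intro quad_form_nonneg_from_unit_sphere) (simp add: h_def \<delta>_def)
  have minimum: "quad_form n (F t\<^sub>0) c\<^sub>0 + \<delta> * (\<Sum>i<n. (c\<^sub>0 i)\<^sup>2) = 0"
    using zero c\<^sub>0 by (simp add: h_def \<delta>_def unit_sphere_def)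
  have "0 < \<delta>" using \<epsilon>(1) by (simp add: \<delta>_def)
  have F\<^sub>0: "F t\<^sub>0 \<in> carrier_mat n n" and Q\<^sub>0: "Q t\<^sub>0 \<in> carrier_mat n n" "psd (Q t\<^sub>0)"
    using carrier[OF t\<^sub>0I] Q[OF t\<^sub>0I] by auto
  from riccati_rate_gt_at_minimizer[OF M F\<^sub>0 Q\<^sub>0 nonneg minimum \<open>0 < \<delta>\<close> small]
  have "0 < quad_form n (F' t\<^sub>0) c\<^sub>0 + \<delta>" using riccati[OF t\<^sub>0I] by simp
  moreover have "((\<lambda>s. h (c\<^sub>0, s)) has_real_derivative quad_form n (F' t\<^sub>0) c\<^sub>0 + \<delta>) (at t\<^sub>0 within {0..\<tau>})"
    unfolding h_def \<delta>_def using deriv[OF t\<^sub>0I] carrier[OF t\<^sub>0I]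
    by (auto intro!: derivative_eq_intros quad_form_has_real_derivative)
  ultimately obtain s where "0 \<le> s" "s < t\<^sub>0" "h (c\<^sub>0, s) < h (c\<^sub>0, t\<^sub>0)"
    using t\<^sub>0 by (elim has_real_derivative_pos_smaller_left) auto
  then show False using before[OF c\<^sub>0] zero by fastforce
qed

lemma riccati_psd:
  fixes F F' :: "real \<Rightarrow> real mat"
  assumes M: "M \<in> carrier_mat n n" "transpose_mat M = M" "psd M"
    and carrier: "\<And>t. t \<in> {0..\<tau>} \<Longrightarrow> F t \<in> carrier_mat n n \<and> F' t \<in> carrier_mat n n"
    and Q: "\<And>t. t \<in> {0..\<tau>} \<Longrightarrow> Q t \<in> carrier_mat n n \<and> psd (Q t)"
    and deriv: "\<And>t. t \<in> {0..\<tau>} \<Longrightarrow> mat_has_deriv F (F' t) (at t within {0..\<tau>})"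
    and riccati: "\<And>t. t \<in> {0..\<tau>} \<Longrightarrow> F' t = Q t - F t * M * F t"
    and F0: "F 0 = 0\<^sub>m n n" and \<tau>: "0 \<le> \<tau>"
  shows "psd (F \<tau>)"
proof -
  define \<mu> where "\<mu> = (\<Sum>k<n. \<Sum>l<n. \<bar>M $$ (k,l)\<bar>)"
  have "0 \<le> \<mu>" by (simp add: \<mu>_def sum_nonneg)
  have \<mu>_bound: "quad_form n M c \<le> \<mu>" if "c \<in> unit_sphere n" for c
    unfolding \<mu>_def using that by (rule quad_form_le_sum_abs)
  have "0 \<le> quad_form n (F \<tau>) c" if c: "c \<in> unit_sphere n" for c
  proof (rule field_le_epsilon)
    fix e :: real assume "0 < e"
    define \<epsilon> where "\<epsilon> = min (e / exp \<tau>) (1 / (2 * exp \<tau> * (\<mu> + 1)))"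
    have "0 < 1 / (2 * exp \<tau> * (\<mu> + 1))" using \<open>0 \<le> \<mu>\<close> by simp
    then have "0 < \<epsilon>" using \<open>0 < e\<close> by (simp add: \<epsilon>_def)
    have "\<epsilon> \<le> e / exp \<tau>" unfolding \<epsilon>_def by simp
    then have "\<epsilon> * exp \<tau> \<le> e" by (simp add: pos_le_divide_eq)
    have "\<epsilon> \<le> 1 / (2 * exp \<tau> * (\<mu> + 1))" unfolding \<epsilon>_def by simp
    then have "\<epsilon> * exp \<tau> * \<mu> \<le> 1 / (2 * exp \<tau> * (\<mu> + 1)) * exp \<tau> * \<mu>"
      using \<open>0 \<le> \<mu>\<close> by (intro mult_right_mono) auto
    also have "\<dots> = \<mu> / (2 * (\<mu> + 1))" by simp
    also have "\<dots> < 1" using \<open>0 \<le> \<mu>\<close> by (simp add: field_simps)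
    finally have "0 < quad_form n (F \<tau>) c + \<epsilon> * exp \<tau>"
      using riccati_perturbed_pos[OF M \<mu>_bound carrier Q deriv riccati F0
          \<open>0 < \<epsilon>\<close> _ c] \<tau>
      by simp
    then show "0 \<le> quad_form n (F \<tau>) c + e" using \<open>\<epsilon> * exp \<tau> \<le> e\<close> by linarith
  qed
  then have "0 \<le> quad_form n (F \<tau>) b" for b
    using quad_form_nonneg_from_unit_sphere[of n "F \<tau>" 0] by simp
  then show ?thesis using psd_iff_quad_form_nonneg carrier \<tau> by auto
qed

theorem corollary7p7:
  fixes N K D :: nat and \<gamma> :: "nat \<Rightarrow> real" and \<Lambda> \<alpha> \<xi> :: "real mat"
    and F H F' H' :: "real \<Rightarrow> real mat" and Tmax :: ereal
  assumes N: "N \<ge> 2" and KD: "K \<le> D"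
    and gpos: "\<forall>n \<in> {1..N}. \<gamma> n > 0"
    and gmax: "\<forall>n \<in> {1..N}. \<gamma> n \<le> \<gamma> N"
    and Lam: "\<Lambda> \<in> carrier_mat K K" "sym_pos_def \<Lambda>"
    and alpha: "\<alpha> \<in> carrier_mat K D"
    and xi: "\<xi> \<in> carrier_mat ((N - 1) * D) D"
    and Tpos: "Tmax > 0"
    and dims: "\<forall>t. 0 \<le> t \<and> ereal t < Tmax \<longrightarrow>
       F t \<in> carrier_mat (K * (N - 1)) (K * (N - 1)) \<and> H t \<in> carrier_mat (K * (N - 1)) D \<and>
       F' t \<in> carrier_mat (K * (N - 1)) (K * (N - 1)) \<and> H' t \<in> carrier_mat (K * (N - 1)) D"
    and derivs: "\<forall>t. 0 \<le> t \<and> ereal t < Tmax \<longrightarrow>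
       mat_has_deriv F (F' t) (at t within {s. 0 \<le> s \<and> ereal s < Tmax}) \<and>
       mat_has_deriv H (H' t) (at t within {s. 0 \<le> s \<and> ereal s < Tmax})"
    and eqF: "\<forall>t. 0 \<le> t \<and> ereal t < Tmax \<longrightarrow>
       (let A = \<alpha> + transpose_mat (cvec N \<gamma> \<otimes>\<^sub>K 1\<^sub>m K) * H t in
        F' t = Gam N \<gamma> \<otimes>\<^sub>K (A * transpose_mat A)
               - F t * (1\<^sub>m (N - 1) \<otimes>\<^sub>K mat_inv \<Lambda>) * F t)"
    and eqH: "\<forall>t. 0 \<le> t \<and> ereal t < Tmax \<longrightarrow>
       (let A = \<alpha> + transpose_mat (cvec N \<gamma> \<otimes>\<^sub>K 1\<^sub>m K) * H t in
        H' t = (Gam N \<gamma> \<otimes>\<^sub>K A) * \<xi>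
               - F t * (1\<^sub>m (N - 1) \<otimes>\<^sub>K mat_inv \<Lambda>) * H t)"
    and init: "F 0 = 0\<^sub>m (K * (N - 1)) (K * (N - 1))" "H 0 = 0\<^sub>m (K * (N - 1)) D"
  shows "\<forall>\<tau>. 0 \<le> \<tau> \<and> ereal \<tau> < Tmax \<longrightarrow> psd (F \<tau>)"
proof (intro allI impI)
  fix \<tau> assume \<tau>: "0 \<le> \<tau> \<and> ereal \<tau> < Tmax"
  define n where "n = K * (N - 1)"
  define M where "M = 1\<^sub>m (N - 1) \<otimes>\<^sub>K mat_inv \<Lambda>"
  define A where "A t = \<alpha> + transpose_mat (cvec N \<gamma> \<otimes>\<^sub>K 1\<^sub>m K) * H t" for t
  define Q where "Q t = Gam N \<gamma> \<otimes>\<^sub>K (A t * transpose_mat (A t))" for t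
  have n: "(N - 1) * K = n" unfolding n_def by simp
  have M: "M \<in> carrier_mat n n" "transpose_mat M = M" "psd M"
    using one_kron_mat_inv[OF Lam, of "N - 1"] n unfolding M_def by simp_all
  have Gam: "Gam N \<gamma> \<in> carrier_mat (N - 1) (N - 1)" by (simp add: Gam_def)
  have Gam_psd: "psd (Gam N \<gamma>)" using N gpos gmax by (intro psd_Gam) auto
  have window: "0 \<le> t \<and> ereal t < Tmax" if "t \<in> {0..\<tau>}" for t
    using that \<tau> order.strict_trans1[of "ereal t" "ereal \<tau>" Tmax] by auto
  have Q: "Q t \<in> carrier_mat n n \<and> psd (Q t)" if "t \<in> {0..\<tau>}" for t
  proof -
    have "H t \<in> carrier_mat n D" using dims window[OF that] unfolding n_def by blast
    then have "A t \<in> carrier_mat K D" by (intro carrier_matI) (simp_all add: A_def cvec_def)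
    then have "A t * transpose_mat (A t) \<in> carrier_mat K K" by simp
    then show ?thesis using kron_carrier_mat[OF Gam] psd_kron_gram[OF Gam Gam_psd] \<open>A t \<in> _\<close> n
      unfolding Q_def by metis
  qed
  show "psd (F \<tau>)"
  proof (rule riccati_psd[OF M _ Q])
    fix t assume t: "t \<in> {0..\<tau>}"
    show "F t \<in> carrier_mat n n \<and> F' t \<in> carrier_mat n n" using dims window[OF t] unfolding n_def by blast
    show "mat_has_deriv F (F' t) (at t within {0..\<tau>})"
      using derivs window t by (blast intro: mat_has_deriv_subset)
    show "F' t = Q t - F t * M * F t" using eqF window[OF t] unfolding Q_def A_def M_def Let_def by simp
  qed (use init \<tau> in \<open>simp_all add: n_def\<close>)
qed

end
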